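(* Let $\theta=(\{X_g\},\{\theta_g\})$ be an ordered partial action of a groupoid $\mathcal{G}$ on a semilatticeoid $X$ such that $X_g\neq\emptyset$ for every $g\in\mathcal{G}$. Let $(\eta,E,i)$ be the ordered globalization of $\theta$ given by the globalization construction (with the induced order on $E$). Then $(\mathcal{G},E,i(X))$ is a McAlister triple.
   Context: Inverse semigroupoid: arrows $\mathcal{S}$, objects $\mathcal{S}^{(0)}$, maps $d,c$, associative multiplication on $\mathcal{S}^{(2)}=\{(s,t):d(s)=c(t)\}$ with $d(st)=d(t)$, $c(st)=c(s)$, unique $s^*$ with $ss^*s=s$, $s^*ss^*=s^*$; $E(\mathcal{S})$ = idempotents; natural order on parallel arrows $s\leqslant t$ iff $s=te$ for an idempotent $e$ with $(t,e)\in\mathcal{S}^{(2)}$. A groupoid is an inverse semigroupoid with exactly one idempotent (the identity) over each object; the inverse of $g$ is written $g^{-1}$. A semilatticeoid is an inverse semigroupoid all of whose elements are idempotent (a disjoint union of meet semilattices, one per object), ordered by its natural order. A partial action of $\mathcal{S}$ on a set $X$ is a pair $(\{X_s\},\{\theta_s\})$, $X_s\subseteq X$, $\theta_s:X_{s^*}\to X_s$, with: each $\theta_s$ bijective, $\theta_s^{-1}=\theta_{s^*}$, $X=\bigcup_sX_s$; $\theta_s\circ\theta_t\subseteq\theta_{st}$ for $(s,t)\in\mathcal{S}^{(2)}$; $X_s\subseteq X_t$ if $s\leqslant t$. Global: $\theta_s\circ\theta_t=\theta_{st}$. Ordered (on a poset): each $X_s$ an order ideal, each $\theta_s$ an order isomorphism.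 Orbit of $Y\subseteq E$ under a global action $\eta$: $\bigcup_s\eta_s(Y\cap E_{s^*})$. A McAlister triple $(\mathcal{G},E,X)$ consists of a groupoid $\mathcal{G}$, a poset $E$, an order ideal $X$ of $E$ which is a semilatticeoid under the induced order, and an ordered global action $\eta$ of $\mathcal{G}$ on $E$ such that the orbit of $X$ is $E$ and $\eta_g(X\cap E_{g^{-1}})\cap X\neq\emptyset$ for all $g\in\mathcal{G}$. Globalization construction: $D=\{(s,x)\in\mathcal{S}\times X:x\in X_{s^*s}\}$; $(s,x)\sim(t,y)$ iff (R1) $(t^*,s)\in\mathcal{S}^{(2)}$, $x\in X_{s^*t}$, $\theta_{t^*s}(x)=y$, or (R2) $s,t\in E(\mathcal{S})$ and $x=y$; $\approx$ the equivalence relation generated by $\sim$; $E=D/{\approx}$ with classes $[s,x]$; $D_s=\{(p,x)\in D:(s^*,p)\in\mathcal{S}^{(2)},x\in X_{p^*ss^*p}\}$, $E_s=\{[p,x]:(p,x)\in D_s\}$, $\eta_s([p,x])=[sp,x]$ for $(p,x)\in D_{s^*}$; $i(x)=[e,x]$ for any idempotent $e$ with $x\in X_e$. Order on $E$: $[s,x]\leqslant[t,y]$ iff there exist $(r,y')\in D$, $x'\in X$ with $(r,y')\approx(t,y)$, $x'\leqslant y'$, $(r,x')\approx(s,x)$. It is known that then $\eta$ is an ordered global action on $E$, $i$ is an injective order embedding onto the order ideal $i(X)$, and the orbit of $i(X)$ is $E$. *)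

theory Defs
  imports Main
begin

record ('a,'o) semigroupoid =
  arr  :: "'a set"
  obj  :: "'o set"
  sdom :: "'a \<Rightarrow> 'o"
  scod :: "'a \<Rightarrow> 'o"
  mult :: "'a \<Rightarrow> 'a \<Rightarrow> 'a"

definition composable :: "('a,'o,'z) semigroupoid_scheme \<Rightarrow> 'a \<Rightarrow> 'a \<Rightarrow> bool" where
  "composable S s t \<longleftrightarrow> s \<in> arr S \<and> t \<in> arr S \<and> sdom S s = scod S t"

definition semigroupoid :: "('a,'o,'z) semigroupoid_scheme \<Rightarrow> bool" where
  "semigroupoid S \<longleftrightarrow>
     (\<forall>s\<in>arr S. sdom S s \<in> obj S \<and> scod S s \<in> obj S) \<and>
     (\<forall>s t. composable S s t \<longrightarrow>
        mult S s t \<in> arr S \<and> sdom S (mult S s t) = sdom S t \<and> scod S (mult S s t) = scod S s) \<and>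
     (\<forall>s t u. composable S s t \<and> composable S t u \<longrightarrow>
        mult S (mult S s t) u = mult S s (mult S t u))"

definition is_inv :: "('a,'o,'z) semigroupoid_scheme \<Rightarrow> 'a \<Rightarrow> 'a \<Rightarrow> bool" where
  "is_inv S s s' \<longleftrightarrow> s' \<in> arr S \<and> sdom S s = scod S s' \<and> sdom S s' = scod S s \<and>
     mult S (mult S s s') s = s \<and> mult S (mult S s' s) s' = s'"

definition inverse_semigroupoid :: "('a,'o,'z) semigroupoid_scheme \<Rightarrow> bool" where
  "inverse_semigroupoid S \<longleftrightarrow> semigroupoid S \<and> (\<forall>s\<in>arr S. \<exists>!s'. is_inv S s s')"

definition star :: "('a,'o,'z) semigroupoid_scheme \<Rightarrow> 'a \<Rightarrow> 'a" where
  "star S s = (THE s'. is_inv S s s')"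

definition idem :: "('a,'o,'z) semigroupoid_scheme \<Rightarrow> 'a \<Rightarrow> bool" where
  "idem S e \<longleftrightarrow> e \<in> arr S \<and> sdom S e = scod S e \<and> mult S e e = e"

definition nat_le :: "('a,'o,'z) semigroupoid_scheme \<Rightarrow> 'a \<Rightarrow> 'a \<Rightarrow> bool" where
  "nat_le S s t \<longleftrightarrow> s \<in> arr S \<and> t \<in> arr S \<and> sdom S s = sdom S t \<and> scod S s = scod S t \<and>
     (\<exists>e. idem S e \<and> sdom S t = scod S e \<and> s = mult S t e)"

definition groupoid :: "('a,'o,'z) semigroupoid_scheme \<Rightarrow> bool" where
  "groupoid S \<longleftrightarrow> inverse_semigroupoid S \<and> (\<forall>x\<in>obj S. \<exists>!e. idem S e \<and> sdom S e = x)"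

definition semilatticeoid :: "('a,'o,'z) semigroupoid_scheme \<Rightarrow> bool" where
  "semilatticeoid S \<longleftrightarrow> inverse_semigroupoid S \<and> (\<forall>s\<in>arr S. idem S s)"

definition poset_on :: "'e set \<Rightarrow> ('e \<Rightarrow> 'e \<Rightarrow> bool) \<Rightarrow> bool" where
  "poset_on E le \<longleftrightarrow> (\<forall>x\<in>E. le x x) \<and>
     (\<forall>x\<in>E. \<forall>y\<in>E. le x y \<and> le y x \<longrightarrow> x = y) \<and>
     (\<forall>x\<in>E. \<forall>y\<in>E. \<forall>z\<in>E. le x y \<and> le y z \<longrightarrow> le x z)"

definition order_ideal :: "'e set \<Rightarrow> ('e \<Rightarrow> 'e \<Rightarrow> bool) \<Rightarrow> 'e set \<Rightarrow> bool" where
  "order_ideal E le Y \<longleftrightarrow> Y \<subseteq> E \<and> (\<forall>y\<in>Y. \<forall>z\<in>E. le z y \<longrightarrow> z \<in> Y)"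

definition partial_action ::
  "('a,'o,'z) semigroupoid_scheme \<Rightarrow> 'x set \<Rightarrow> ('a \<Rightarrow> 'x set) \<Rightarrow> ('a \<Rightarrow> 'x \<Rightarrow> 'x) \<Rightarrow> bool" where
  "partial_action S Xs Xd th \<longleftrightarrow>
     (\<forall>s\<in>arr S. Xd s \<subseteq> Xs) \<and>
     (\<forall>s\<in>arr S. bij_betw (th s) (Xd (star S s)) (Xd s)) \<and>
     (\<forall>s\<in>arr S. \<forall>x\<in>Xd (star S s). th (star S s) (th s x) = x) \<and>
     Xs = (\<Union>s\<in>arr S. Xd s) \<and>
     (\<forall>s t. composable S s t \<longrightarrow>
        (\<forall>x\<in>Xd (star S t). th t x \<in> Xd (star S s) \<longrightarrow>
           x \<in> Xd (star S (mult S s t)) \<and> th (mult S s t) x = th s (th t x))) \<and>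
     (\<forall>s t. nat_le S s t \<longrightarrow> Xd s \<subseteq> Xd t)"

text \<open>Global: th_s \<circ> th_t = th_st, i.e. additionally the domains coincide.\<close>
definition global_action ::
  "('a,'o,'z) semigroupoid_scheme \<Rightarrow> 'x set \<Rightarrow> ('a \<Rightarrow> 'x set) \<Rightarrow> ('a \<Rightarrow> 'x \<Rightarrow> 'x) \<Rightarrow> bool" where
  "global_action S Xs Xd th \<longleftrightarrow> partial_action S Xs Xd th \<and>
     (\<forall>s t. composable S s t \<longrightarrow>
        (\<forall>x\<in>Xd (star S (mult S s t)). x \<in> Xd (star S t) \<and> th t x \<in> Xd (star S s)))"

definition ordered_action_cond ::
  "('a,'o,'z) semigroupoid_scheme \<Rightarrow> 'x set \<Rightarrow> ('x \<Rightarrow> 'x \<Rightarrow> bool) \<Rightarrow> ('a \<Rightarrow> 'x set) \<Rightarrow> ('a \<Rightarrow> 'x \<Rightarrow> 'x) \<Rightarrow> bool" where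
  "ordered_action_cond S Xs le Xd th \<longleftrightarrow>
     (\<forall>s\<in>arr S. order_ideal Xs le (Xd s) \<and>
        (\<forall>x\<in>Xd (star S s). \<forall>y\<in>Xd (star S s). le x y \<longleftrightarrow> le (th s x) (th s y)))"

definition ordered_partial_action where
  "ordered_partial_action S Xs le Xd th \<longleftrightarrow>
     partial_action S Xs Xd th \<and> ordered_action_cond S Xs le Xd th"

definition ordered_global_action where
  "ordered_global_action S Xs le Xd th \<longleftrightarrow>
     global_action S Xs Xd th \<and> ordered_action_cond S Xs le Xd th"

definition orbit ::
  "('a,'o,'z) semigroupoid_scheme \<Rightarrow> ('a \<Rightarrow> 'x set) \<Rightarrow> ('a \<Rightarrow> 'x \<Rightarrow> 'x) \<Rightarrow> 'x set \<Rightarrow> 'x set" where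
  "orbit S Xd th Y = (\<Union>s\<in>arr S. th s ` (Y \<inter> Xd (star S s)))"

text \<open>The order ideal Y is a semilatticeoid under the induced order: there is a semilatticeoid
  structure with arrow set Y whose natural order is the restriction of le.  (Objects of that
  semilatticeoid are taken in the element type, which is no loss of generality.)\<close>
definition mcalister_triple ::
  "('a,'o,'z) semigroupoid_scheme \<Rightarrow> 'e set \<Rightarrow> ('e \<Rightarrow> 'e \<Rightarrow> bool) \<Rightarrow> ('a \<Rightarrow> 'e set)
    \<Rightarrow> ('a \<Rightarrow> 'e \<Rightarrow> 'e) \<Rightarrow> 'e set \<Rightarrow> bool" where
  "mcalister_triple G E le Ed eta Y \<longleftrightarrow>
     groupoid G \<and> poset_on E le \<and> order_ideal E le Y \<and>
     (\<exists>T :: ('e,'e) semigroupoid. semilatticeoid T \<and> arr T = Y \<and>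
         (\<forall>x\<in>Y. \<forall>y\<in>Y. nat_le T x y \<longleftrightarrow> le x y)) \<and>
     ordered_global_action G E le Ed eta \<and>
     orbit G Ed eta Y = E \<and>
     (\<forall>g\<in>arr G. eta g ` (Y \<inter> Ed (star G g)) \<inter> Y \<noteq> {})"

definition glD where
  "glD G X Xd = {(s,x). s \<in> arr G \<and> x \<in> arr X \<and> x \<in> Xd (mult G (star G s) s)}"

definition gl_sim where
  "gl_sim G Xd th a b \<longleftrightarrow> (case (a,b) of ((s,x),(t,y)) \<Rightarrow>
     (composable G (star G t) s \<and> x \<in> Xd (mult G (star G s) t) \<and> th (mult G (star G t) s) x = y)
     \<or> (idem G s \<and> idem G t \<and> x = y))"

definition glrel where
  "glrel G X Xd th = {(a,b). a \<in> glD G X Xd \<and> b \<in> glD G X Xd \<and> gl_sim G Xd th a b}"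

definition glapprox where
  "glapprox G X Xd th = (glrel G X Xd th \<union> (glrel G X Xd th)\<inverse>)\<^sup>* \<inter> (glD G X Xd \<times> glD G X Xd)"

definition glE where
  "glE G X Xd th = glD G X Xd // glapprox G X Xd th"

definition glcls where
  "glcls G X Xd th a = glapprox G X Xd th `` {a}"

definition glDs where
  "glDs G X Xd s = {(p,x) \<in> glD G X Xd. composable G (star G s) p \<and>
       x \<in> Xd (mult G (mult G (mult G (star G p) s) (star G s)) p)}"

definition glEs where
  "glEs G X Xd th s = glcls G X Xd th ` glDs G X Xd s"

definition gleta where
  "gleta G X Xd th s C = (SOME C'. \<exists>p x. (p,x) \<in> C \<and> (p,x) \<in> glDs G X Xd (star G s) \<and>
       C' = glcls G X Xd th (mult G s p, x))"

definition gli where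
  "gli G X Xd th x = glcls G X Xd th (SOME e. idem G e \<and> x \<in> Xd e, x)"

definition glle where
  "glle G X Xd th C C' \<longleftrightarrow> (\<exists>r y' x'. (r,y') \<in> glD G X Xd \<and> x' \<in> arr X \<and> (r,y') \<in> C' \<and>
       nat_le X x' y' \<and> (r,x') \<in> C)"

end

theory Submission
  imports Defs
begin

(*
  In a groupoid the equivalence on D generated by (R1) and (R2) can be written down: (s,x) and
  (t,y) are equivalent iff either c(s) = c(t) and theta_{t* s}(x) = y, or x is in X_{s*}, y is in
  X_{t*} and theta_s(x) = theta_t(y).  Consequently [s,x] <= [t,y] can be tested at any
  representative (t,y) of the larger class, where it reduces to the order of X; eta_s translates
  the first coordinate; and i(x) = [e,x] for every unit e with x in X_e.  From this, i is an order
  embedding of X onto an order ideal of E (so i(X) carries the semilatticeoid structure of X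
  transported along i), every class satisfies [p,x] = eta_p(i x), and for x in X_{g*} the point
  eta_g(i x) = [g,x] = i(theta_g x) lies again in i(X).
*)

section \<open>Groupoids\<close>

locale groupoid_setting =
  fixes G :: "('a,'o,'z) semigroupoid_scheme"
  assumes groupoid: "groupoid G"
begin

abbreviation "A \<equiv> arr G"
abbreviation "dm \<equiv> sdom G"
abbreviation "cd \<equiv> scod G"
abbreviation "iv \<equiv> star G"
abbreviation gmult (infixl "\<cdot>" 70) where "s \<cdot> t \<equiv> mult G s t"

lemma inverse_semigroupoid: "inverse_semigroupoid G"
  using groupoid unfolding groupoid_def by auto

lemma semigroupoid: "semigroupoid G"
  using inverse_semigroupoid unfolding inverse_semigroupoid_def by auto

lemma mult_arr [simp]: "s \<in> A \<Longrightarrow> t \<in> A \<Longrightarrow> dm s = cd t \<Longrightarrow> s \<cdot> t \<in> A"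
  and dom_mult [simp]: "s \<in> A \<Longrightarrow> t \<in> A \<Longrightarrow> dm s = cd t \<Longrightarrow> dm (s \<cdot> t) = dm t"
  and cod_mult [simp]: "s \<in> A \<Longrightarrow> t \<in> A \<Longrightarrow> dm s = cd t \<Longrightarrow> cd (s \<cdot> t) = cd s"
  using semigroupoid unfolding semigroupoid_def composable_def by blast+

lemma mult_assoc [simp]:
  "s \<in> A \<Longrightarrow> t \<in> A \<Longrightarrow> u \<in> A \<Longrightarrow> dm s = cd t \<Longrightarrow> dm t = cd u \<Longrightarrow> s \<cdot> t \<cdot> u = s \<cdot> (t \<cdot> u)"
  using semigroupoid unfolding semigroupoid_def composable_def by blast

lemma dom_obj: "s \<in> A \<Longrightarrow> dm s \<in> obj G"
  using semigroupoid unfolding semigroupoid_def by blast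

lemma is_inv_star: "s \<in> A \<Longrightarrow> is_inv G s (iv s)"
  unfolding star_def using inverse_semigroupoid unfolding inverse_semigroupoid_def by (metis theI')

lemma star_eqI: "s \<in> A \<Longrightarrow> is_inv G s t \<Longrightarrow> iv s = t"
  using inverse_semigroupoid is_inv_star unfolding inverse_semigroupoid_def by blast

lemma star_arr [simp]: "s \<in> A \<Longrightarrow> iv s \<in> A"
  and dom_star [simp]: "s \<in> A \<Longrightarrow> dm (iv s) = cd s"
  and cod_star [simp]: "s \<in> A \<Longrightarrow> cd (iv s) = dm s"
  using is_inv_star unfolding is_inv_def by metis+

lemma mult_star_mult [simp]: "s \<in> A \<Longrightarrow> s \<cdot> (iv s \<cdot> s) = s"
  and star_mult_star [simp]: "s \<in> A \<Longrightarrow> iv s \<cdot> (s \<cdot> iv s) = iv s"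
  using is_inv_star unfolding is_inv_def by (metis mult_assoc star_arr)+

lemma idem_arr: "idem G e \<Longrightarrow> e \<in> A"
  and idem_dom_cod: "idem G e \<Longrightarrow> dm e = cd e"
  and idem_mult_self: "idem G e \<Longrightarrow> e \<cdot> e = e"
  unfolding idem_def by auto

lemma idem_star_mult [simp]: "s \<in> A \<Longrightarrow> idem G (iv s \<cdot> s)"
  unfolding idem_def
  by (metis mult_assoc cod_star cod_mult dom_star dom_mult star_arr mult_arr star_mult_star)

lemma idem_mult_star [simp]: "s \<in> A \<Longrightarrow> idem G (s \<cdot> iv s)"
  unfolding idem_def
  by (metis mult_assoc cod_star cod_mult dom_star dom_mult star_arr mult_arr mult_star_mult)

lemma idem_unique: "idem G e \<Longrightarrow> idem G f \<Longrightarrow> dm e = dm f \<Longrightarrow> e = f"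
  using groupoid dom_obj unfolding groupoid_def idem_def by metis

lemma idem_mult_left: assumes "idem G e" "t \<in> A" "dm e = cd t" shows "e \<cdot> t = t"
proof -
  have "e = t \<cdot> iv t"
    using assms idem_unique[OF assms(1) idem_mult_star[OF assms(2)]] by simp
  then show ?thesis
    using assms by (metis mult_assoc star_arr mult_star_mult dom_star cod_star)
qed

lemma idem_mult_right: assumes "idem G e" "t \<in> A" "cd e = dm t" shows "t \<cdot> e = t"
proof -
  have "e = iv t \<cdot> t"
    using assms idem_unique[OF assms(1) idem_star_mult[OF assms(2)]] idem_dom_cod by simp
  then show ?thesis
    using assms by simp
qed

lemma star_star [simp]: "s \<in> A \<Longrightarrow> iv (iv s) = s"
  using is_inv_star[of s] by (intro star_eqI) (auto simp: is_inv_def)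

lemma star_idem: "idem G e \<Longrightarrow> iv e = e"
  by (intro star_eqI) (auto simp: is_inv_def idem_def)

lemma star_idem_mult: "idem G e \<Longrightarrow> iv e \<cdot> e = e"
  using star_idem idem_mult_self by metis

lemma mult_star_cancel [simp]: "s \<in> A \<Longrightarrow> t \<in> A \<Longrightarrow> cd s = cd t \<Longrightarrow> s \<cdot> (iv s \<cdot> t) = t"
  by (metis mult_assoc cod_star dom_star idem_mult_star idem_mult_left star_arr dom_mult)

lemma star_mult_cancel [simp]: "s \<in> A \<Longrightarrow> t \<in> A \<Longrightarrow> dm s = cd t \<Longrightarrow> iv s \<cdot> (s \<cdot> t) = t"
  by (metis mult_assoc dom_star idem_star_mult idem_mult_left star_arr dom_mult)

lemma star_mult: "s \<in> A \<Longrightarrow> t \<in> A \<Longrightarrow> dm s = cd t \<Longrightarrow> iv (s \<cdot> t) = iv t \<cdot> iv s"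
  by (rule star_eqI) (simp_all add: is_inv_def)

lemma star_star_mult: "s \<in> A \<Longrightarrow> t \<in> A \<Longrightarrow> cd s = cd t \<Longrightarrow> iv (iv t \<cdot> s) = iv s \<cdot> t"
  by (simp add: star_mult)

lemma nat_le_imp_eq: "nat_le G s t \<Longrightarrow> s = t"
  unfolding nat_le_def by (metis idem_mult_right)

end

section \<open>Semilatticeoids and their injective images\<close>

locale semilatticeoid_setting =
  fixes S :: "('x,'p,'w) semigroupoid_scheme"
  assumes semilatticeoid: "semilatticeoid S"
begin

lemma inverse_semigroupoid: "inverse_semigroupoid S"
  and all_idem: "x \<in> arr S \<Longrightarrow> idem S x"
  using semilatticeoid unfolding semilatticeoid_def by auto

lemma semigroupoid: "semigroupoid S"
  using inverse_semigroupoid unfolding inverse_semigroupoid_def by auto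

lemma mult_self: "x \<in> arr S \<Longrightarrow> mult S x x = x"
  and dom_eq_cod: "x \<in> arr S \<Longrightarrow> sdom S x = scod S x"
  using all_idem unfolding idem_def by auto

lemma mult_arr: "x \<in> arr S \<Longrightarrow> y \<in> arr S \<Longrightarrow> sdom S x = sdom S y \<Longrightarrow> mult S x y \<in> arr S"
  and dom_mult: "x \<in> arr S \<Longrightarrow> y \<in> arr S \<Longrightarrow> sdom S x = sdom S y \<Longrightarrow> sdom S (mult S x y) = sdom S x"
  using semigroupoid dom_eq_cod unfolding semigroupoid_def composable_def by metis+

lemma mult_assoc:
  "x \<in> arr S \<Longrightarrow> y \<in> arr S \<Longrightarrow> z \<in> arr S \<Longrightarrow> sdom S x = sdom S y \<Longrightarrow> sdom S y = sdom S z \<Longrightarrow>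
   mult S (mult S x y) z = mult S x (mult S y z)"
  using semigroupoid dom_eq_cod unfolding semigroupoid_def composable_def by metis

lemma is_inv_self: "x \<in> arr S \<Longrightarrow> is_inv S x x"
  unfolding is_inv_def using mult_self dom_eq_cod by metis

lemma is_inv_unique: "x \<in> arr S \<Longrightarrow> is_inv S x y \<Longrightarrow> is_inv S x z \<Longrightarrow> y = z"
  using inverse_semigroupoid unfolding inverse_semigroupoid_def by blast

text \<open>Both x y and y x are inverses of the idempotent x y, so uniqueness of inverses forces
  commutativity.\<close>
lemma mult_commute:
  assumes "x \<in> arr S" "y \<in> arr S" "sdom S x = sdom S y"
  shows "mult S x y = mult S y x"
proof -
  let ?xy = "mult S x y" and ?yx = "mult S y x"
  have arrs: "?xy \<in> arr S" "?yx \<in> arr S" "sdom S ?xy = sdom S x" "sdom S ?yx = sdom S x"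
    using mult_arr dom_mult assms by metis+
  have absorb: "mult S u (mult S u v) = mult S u v"
    if "u \<in> arr S" "v \<in> arr S" "sdom S u = sdom S v" for u v
    using that mult_assoc mult_self by metis
  have "mult S (mult S ?xy ?yx) ?xy = mult S x (mult S y (mult S y (mult S x ?xy)))"
    using assms arrs mult_assoc mult_arr dom_mult by metis
  also have "\<dots> = ?xy"
    using assms arrs absorb mult_assoc mult_self by metis
  finally have xy_yx_xy: "mult S (mult S ?xy ?yx) ?xy = ?xy" .
  have "mult S (mult S ?yx ?xy) ?yx = mult S y (mult S x (mult S x (mult S y ?yx)))"
    using assms arrs mult_assoc mult_arr dom_mult by metis
  also have "\<dots> = ?yx"
    using assms arrs absorb mult_assoc mult_self by metis
  finally have yx_xy_yx: "mult S (mult S ?yx ?xy) ?yx = ?yx" .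
  have "is_inv S ?xy ?yx"
    unfolding is_inv_def using arrs dom_eq_cod xy_yx_xy yx_xy_yx by metis
  then show ?thesis
    using is_inv_unique is_inv_self arrs by metis
qed

lemma nat_le_iff:
  "nat_le S x y \<longleftrightarrow> x \<in> arr S \<and> y \<in> arr S \<and> sdom S x = sdom S y \<and> mult S y x = x"
proof
  assume "nat_le S x y"
  then obtain e where e: "x \<in> arr S" "y \<in> arr S" "sdom S x = sdom S y" "idem S e"
    "sdom S y = scod S e" "x = mult S y e"
    unfolding nat_le_def by blast
  then have "mult S y x = mult S (mult S y y) e"
    using mult_assoc idem_def dom_eq_cod by metis
  then show "x \<in> arr S \<and> y \<in> arr S \<and> sdom S x = sdom S y \<and> mult S y x = x"
    using e mult_self by metis
next
  assume "x \<in> arr S \<and> y \<in> arr S \<and> sdom S x = sdom S y \<and> mult S y x = x"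
  then show "nat_le S x y"
    unfolding nat_le_def using all_idem dom_eq_cod by metis
qed

lemma nat_le_refl: "x \<in> arr S \<Longrightarrow> nat_le S x x"
  using nat_le_iff mult_self by metis

lemma nat_le_trans: "nat_le S x y \<Longrightarrow> nat_le S y z \<Longrightarrow> nat_le S x z"
  unfolding nat_le_iff by (metis mult_assoc)

lemma nat_le_antisym: "nat_le S x y \<Longrightarrow> nat_le S y x \<Longrightarrow> x = y"
  unfolding nat_le_iff by (metis mult_commute)

lemma nat_le_arr: "nat_le S x y \<Longrightarrow> x \<in> arr S" "nat_le S x y \<Longrightarrow> y \<in> arr S"
  unfolding nat_le_iff by auto

end

text \<open>Objects of the image are named by the image of a chosen arrow over them.\<close>
definition transfer_semigroupoid ::
  "('x,'p,'w) semigroupoid_scheme \<Rightarrow> ('x \<Rightarrow> 'e) \<Rightarrow> ('e,'e) semigroupoid" where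
  "transfer_semigroupoid S f =
     (let g = inv_into (arr S) f; ob = (\<lambda>p. f (SOME x. x \<in> arr S \<and> sdom S x = p)) in
      \<lparr>arr = f ` arr S, obj = ob ` obj S,
       sdom = \<lambda>a. ob (sdom S (g a)), scod = \<lambda>a. ob (sdom S (g a)),
       mult = \<lambda>a b. f (mult S (g a) (g b))\<rparr>)"

locale semilatticeoid_injection = semilatticeoid_setting S
  for S :: "('x,'p,'w) semigroupoid_scheme" +
  fixes f :: "'x \<Rightarrow> 'e"
  assumes inj: "inj_on f (arr S)"
begin

abbreviation "T \<equiv> transfer_semigroupoid S f"
abbreviation "obj_name p \<equiv> f (SOME x. x \<in> arr S \<and> sdom S x = p)"

lemma arr_transfer: "arr T = f ` arr S"
  and obj_transfer: "obj T = (\<lambda>p. obj_name p) ` obj S"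
  by (simp_all add: transfer_semigroupoid_def Let_def)

lemma sdom_transfer: "x \<in> arr S \<Longrightarrow> sdom T (f x) = obj_name (sdom S x)"
  and scod_transfer: "x \<in> arr S \<Longrightarrow> scod T (f x) = obj_name (sdom S x)"
  and mult_transfer: "x \<in> arr S \<Longrightarrow> y \<in> arr S \<Longrightarrow> mult T (f x) (f y) = f (mult S x y)"
  using inj by (simp_all add: transfer_semigroupoid_def Let_def)

lemma f_eq_iff: "x \<in> arr S \<Longrightarrow> y \<in> arr S \<Longrightarrow> f x = f y \<longleftrightarrow> x = y"
  using inj unfolding inj_on_def by blast

lemma obj_name_eq_iff:
  assumes x: "x \<in> arr S" and y: "y \<in> arr S"
  shows "obj_name (sdom S x) = obj_name (sdom S y) \<longleftrightarrow> sdom S x = sdom S y"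
proof
  assume names: "obj_name (sdom S x) = obj_name (sdom S y)"
  have rep: "(SOME z. z \<in> arr S \<and> sdom S z = sdom S u) \<in> arr S \<and>
      sdom S (SOME z. z \<in> arr S \<and> sdom S z = sdom S u) = sdom S u" if "u \<in> arr S" for u
    by (rule someI[of _ u]) (use that in auto)
  show "sdom S x = sdom S y"
    using names rep[OF x] rep[OF y] f_eq_iff by metis
qed simp

lemma composable_transfer_iff:
  "x \<in> arr S \<Longrightarrow> y \<in> arr S \<Longrightarrow> composable T (f x) (f y) \<longleftrightarrow> sdom S x = sdom S y"
  unfolding composable_def using arr_transfer sdom_transfer scod_transfer obj_name_eq_iff by auto

lemma composable_transferE:
  assumes "composable T a b"
  obtains x y where "x \<in> arr S" "y \<in> arr S" "a = f x" "b = f y" "sdom S x = sdom S y"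
  using assms arr_transfer composable_transfer_iff unfolding composable_def by auto

lemma semigroupoid_transfer: "semigroupoid T"
  unfolding semigroupoid_def
proof (intro conjI allI ballI impI)
  fix a assume "a \<in> arr T"
  then obtain x where "x \<in> arr S" "a = f x"
    using arr_transfer by auto
  moreover have "sdom S x \<in> obj S"
    using semigroupoid \<open>x \<in> arr S\<close> unfolding semigroupoid_def by blast
  ultimately show "sdom T a \<in> obj T" "scod T a \<in> obj T"
    using sdom_transfer scod_transfer obj_transfer by auto
next
  fix a b assume "composable T a b"
  then obtain x y where "x \<in> arr S" "y \<in> arr S" "a = f x" "b = f y" "sdom S x = sdom S y"
    by (rule composable_transferE)
  then show "mult T a b \<in> arr T" "sdom T (mult T a b) = sdom T b" "scod T (mult T a b) = scod T a"
    using mult_transfer mult_arr dom_mult arr_transfer sdom_transfer scod_transfer by auto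
next
  fix a b c assume "composable T a b \<and> composable T b c"
  then have "a \<in> arr T" "b \<in> arr T" "c \<in> arr T"
    and ab: "composable T a b" and bc: "composable T b c"
    unfolding composable_def by auto
  then obtain x y z where xyz: "x \<in> arr S" "y \<in> arr S" "z \<in> arr S" "a = f x" "b = f y" "c = f z"
    using arr_transfer by auto
  then have "sdom S x = sdom S y" "sdom S y = sdom S z"
    using ab bc composable_transfer_iff by auto
  with xyz show "mult T (mult T a b) c = mult T a (mult T b c)"
    using mult_arr[of x y] mult_arr[of y z] dom_mult[of y z]
    by (simp add: mult_transfer mult_assoc)
qed

lemma is_inv_transfer_iff:
  assumes x: "x \<in> arr S" and y: "y \<in> arr S"
  shows "is_inv T (f x) (f y) \<longleftrightarrow> is_inv S x y"
proof -
  have mult3: "mult T (mult T (f u) (f v)) (f u) = f (mult S (mult S u v) u)"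
    if "u \<in> arr S" "v \<in> arr S" "sdom S u = sdom S v" for u v
    using that mult_arr[of u v] by (simp add: mult_transfer)
  have "is_inv T (f x) (f y) \<longleftrightarrow> sdom S x = sdom S y \<and>
      mult T (mult T (f x) (f y)) (f x) = f x \<and> mult T (mult T (f y) (f x)) (f y) = f y"
    unfolding is_inv_def using x y sdom_transfer scod_transfer obj_name_eq_iff arr_transfer by auto
  also have "\<dots> \<longleftrightarrow> sdom S x = sdom S y \<and> mult S (mult S x y) x = x \<and> mult S (mult S y x) y = y"
    using mult3[OF x y] mult3[OF y x] x y mult_arr dom_mult f_eq_iff by (smt (verit))
  also have "\<dots> \<longleftrightarrow> is_inv S x y"
    unfolding is_inv_def using x y dom_eq_cod by auto
  finally show ?thesis .
qed

lemma semilatticeoid_transfer: "semilatticeoid T"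
  unfolding semilatticeoid_def inverse_semigroupoid_def
proof (intro conjI semigroupoid_transfer ballI)
  fix a assume "a \<in> arr T"
  then obtain x where x: "x \<in> arr S" "a = f x"
    using arr_transfer by auto
  show "\<exists>!b. is_inv T a b"
  proof
    show "is_inv T a a"
      using is_inv_transfer_iff is_inv_self x by auto
  next
    fix b assume "is_inv T a b"
    moreover from this obtain y where "y \<in> arr S" "b = f y"
      using arr_transfer unfolding is_inv_def by auto
    ultimately show "b = a"
      using is_inv_transfer_iff is_inv_self is_inv_unique x by metis
  qed
  show "idem T a"
    unfolding idem_def
    using x arr_transfer sdom_transfer scod_transfer mult_transfer mult_self by auto
qed

lemma nat_le_transfer_iff:
  assumes x: "x \<in> arr S" and y: "y \<in> arr S"
  shows "nat_le T (f x) (f y) \<longleftrightarrow> nat_le S x y"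
proof -
  interpret T: semilatticeoid_setting T
    by standard (rule semilatticeoid_transfer)
  have "nat_le T (f x) (f y) \<longleftrightarrow> sdom S x = sdom S y \<and> f (mult S y x) = f x"
    using T.nat_le_iff x y arr_transfer sdom_transfer mult_transfer obj_name_eq_iff by auto
  also have "\<dots> \<longleftrightarrow> sdom S x = sdom S y \<and> mult S y x = x"
    using x y mult_arr f_eq_iff by metis
  finally show ?thesis
    using nat_le_iff x y by auto
qed

end

lemma semilatticeoid_image:
  fixes S :: "('x,'p,'w) semigroupoid_scheme" and f :: "'x \<Rightarrow> 'e"
  assumes "semilatticeoid S" and "inj_on f (arr S)"
  shows "\<exists>T :: ('e,'e) semigroupoid. semilatticeoid T \<and> arr T = f ` arr S \<and>
     (\<forall>x\<in>arr S. \<forall>y\<in>arr S. nat_le T (f x) (f y) \<longleftrightarrow> nat_le S x y)"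
proof -
  interpret semilatticeoid_injection S f
    using assms by unfold_locales
  show ?thesis
    using semilatticeoid_transfer arr_transfer nat_le_transfer_iff by blast
qed

section \<open>The equivalence generated by (R1) and (R2)\<close>

locale globalization_setting = groupoid_setting G + X: semilatticeoid_setting X
  for G :: "('a,'o,'z) semigroupoid_scheme" and X :: "('x,'p,'w) semigroupoid_scheme" +
  fixes Xd :: "'a \<Rightarrow> 'x set" and th :: "'a \<Rightarrow> 'x \<Rightarrow> 'x"
  assumes ordered_partial_action: "ordered_partial_action G (arr X) (nat_le X) Xd th"
    and Xd_nonempty: "\<forall>g\<in>arr G. Xd g \<noteq> {}"
begin

abbreviation le_X (infix "\<le>\<^sub>X" 50) where "x \<le>\<^sub>X y \<equiv> nat_le X x y"

lemma partial_action: "partial_action G (arr X) Xd th"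
  and ordered_action_cond: "ordered_action_cond G (arr X) (nat_le X) Xd th"
  using ordered_partial_action unfolding ordered_partial_action_def by blast+

lemma Xd_arr: "s \<in> A \<Longrightarrow> x \<in> Xd s \<Longrightarrow> x \<in> arr X"
  and th_bij: "s \<in> A \<Longrightarrow> bij_betw (th s) (Xd (iv s)) (Xd s)"
  and th_star_th: "s \<in> A \<Longrightarrow> x \<in> Xd (iv s) \<Longrightarrow> th (iv s) (th s x) = x"
  and arr_X_covered: "x \<in> arr X \<Longrightarrow> \<exists>s\<in>A. x \<in> Xd s"
  using partial_action unfolding partial_action_def by blast+

lemma th_mult:
  "s \<in> A \<Longrightarrow> t \<in> A \<Longrightarrow> dm s = cd t \<Longrightarrow> x \<in> Xd (iv t) \<Longrightarrow> th t x \<in> Xd (iv s) \<Longrightarrow>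
   x \<in> Xd (iv (s \<cdot> t)) \<and> th (s \<cdot> t) x = th s (th t x)"
  using partial_action unfolding partial_action_def composable_def by blast

lemma th_in_Xd: "s \<in> A \<Longrightarrow> x \<in> Xd (iv s) \<Longrightarrow> th s x \<in> Xd s"
  using th_bij bij_betw_apply by metis

lemma th_th_star: "s \<in> A \<Longrightarrow> x \<in> Xd s \<Longrightarrow> th s (th (iv s) x) = x"
  using th_star_th[of "iv s" x] by simp

lemma Xd_down_closed: "s \<in> A \<Longrightarrow> x \<in> Xd s \<Longrightarrow> y \<le>\<^sub>X x \<Longrightarrow> y \<in> Xd s"
  using ordered_action_cond X.nat_le_arr unfolding ordered_action_cond_def order_ideal_def by blast

lemma th_le_iff: "s \<in> A \<Longrightarrow> x \<in> Xd (iv s) \<Longrightarrow> y \<in> Xd (iv s) \<Longrightarrow> x \<le>\<^sub>X y \<longleftrightarrow> th s x \<le>\<^sub>X th s y"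
  using ordered_action_cond unfolding ordered_action_cond_def by blast

lemma th_idem: assumes e: "idem G e" and x: "x \<in> Xd e" shows "th e x = x"
proof -
  have eA: "e \<in> A" and star_e: "iv e = e"
    using e idem_arr star_idem by auto
  have ex: "th e x \<in> Xd e"
    using th_in_Xd[OF eA] x star_e by simp
  have "th e (th e x) = th e x"
    using th_mult[OF eA eA] x ex star_e e idem_dom_cod idem_mult_self by simp
  moreover have "inj_on (th e) (Xd e)"
    using th_bij[OF eA] star_e bij_betw_def by metis
  ultimately show ?thesis
    using x ex inj_on_def by metis
qed

lemma Xd_subset_Xd_range: assumes s: "s \<in> A" and x: "x \<in> Xd s" shows "x \<in> Xd (s \<cdot> iv s)"
proof -
  have "th (iv s) x \<in> Xd (iv s)"
    using th_in_Xd[of "iv s" x] s x by simp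
  then have "x \<in> Xd (iv (s \<cdot> iv s))"
    using th_mult[of s "iv s" x] s x by simp
  then show ?thesis
    using star_idem idem_mult_star s by metis
qed

abbreviation "D \<equiv> glD G X Xd"
abbreviation gl_approx (infix "\<approx>" 50) where "a \<approx> b \<equiv> (a, b) \<in> glapprox G X Xd th"
abbreviation "cls \<equiv> glcls G X Xd th"
abbreviation "E \<equiv> glE G X Xd th"

lemma glD_iff: "(s,x) \<in> D \<longleftrightarrow> s \<in> A \<and> x \<in> Xd (iv s \<cdot> s)"
  unfolding glD_def by (auto intro: Xd_arr[of "iv s \<cdot> s"])

text \<open>shift_related is (R1) itself; image_related describes the identifications that (R1)
  and (R2) generate between pairs with different codomains.\<close>
definition shift_related :: "'a \<Rightarrow> 'x \<Rightarrow> 'a \<Rightarrow> 'x \<Rightarrow> bool" where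
  "shift_related s x t y \<longleftrightarrow>
     s \<in> A \<and> t \<in> A \<and> cd s = cd t \<and> x \<in> Xd (iv s \<cdot> t) \<and> th (iv t \<cdot> s) x = y"

definition image_related :: "'a \<Rightarrow> 'x \<Rightarrow> 'a \<Rightarrow> 'x \<Rightarrow> bool" where
  "image_related s x t y \<longleftrightarrow> s \<in> A \<and> t \<in> A \<and> x \<in> Xd (iv s) \<and> y \<in> Xd (iv t) \<and> th s x = th t y"

definition gl_related :: "'a \<Rightarrow> 'x \<Rightarrow> 'a \<Rightarrow> 'x \<Rightarrow> bool" where
  "gl_related s x t y \<longleftrightarrow> shift_related s x t y \<or> image_related s x t y"

lemma shift_related_sym: "shift_related s x t y \<Longrightarrow> shift_related t y s x"
proof -
  assume "shift_related s x t y"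
  then have a: "s \<in> A" "t \<in> A" "cd s = cd t" "x \<in> Xd (iv s \<cdot> t)" "th (iv t \<cdot> s) x = y"
    unfolding shift_related_def by auto
  have u: "iv t \<cdot> s \<in> A" and x: "x \<in> Xd (iv (iv t \<cdot> s))"
    using a star_star_mult by simp_all
  have "y \<in> Xd (iv t \<cdot> s)"
    using th_in_Xd[OF u x] a by simp
  moreover have "th (iv s \<cdot> t) y = x"
    using th_star_th[OF u x] a star_star_mult by simp
  ultimately show ?thesis
    using a unfolding shift_related_def by simp
qed

lemma shift_related_image:
  assumes r: "shift_related s x t y" and x: "x \<in> Xd (iv s)"
  shows "y \<in> Xd (iv t) \<and> th t y = th s x"
proof -
  have a: "s \<in> A" "t \<in> A" "cd s = cd t" "y \<in> Xd (iv t \<cdot> s)" "th (iv s \<cdot> t) y = x"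
    using shift_related_sym[OF r] unfolding shift_related_def by auto
  have "y \<in> Xd (iv (s \<cdot> (iv s \<cdot> t))) \<and> th (s \<cdot> (iv s \<cdot> t)) y = th s (th (iv s \<cdot> t) y)"
    using th_mult[of s "iv s \<cdot> t" y] a x star_star_mult by auto
  then show ?thesis
    using a by simp
qed

lemma shift_related_trans: "shift_related s x t y \<Longrightarrow> shift_related t y r z \<Longrightarrow> shift_related s x r z"
proof -
  assume "shift_related s x t y" "shift_related t y r z"
  then have a: "s \<in> A" "t \<in> A" "r \<in> A" "cd s = cd t" "cd t = cd r" "x \<in> Xd (iv s \<cdot> t)"
    "th (iv t \<cdot> s) x = y" "y \<in> Xd (iv t \<cdot> r)" "th (iv r \<cdot> t) y = z"
    unfolding shift_related_def by auto
  have "x \<in> Xd (iv (iv r \<cdot> t \<cdot> (iv t \<cdot> s))) \<and>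
      th (iv r \<cdot> t \<cdot> (iv t \<cdot> s)) x = th (iv r \<cdot> t) (th (iv t \<cdot> s) x)"
    by (rule th_mult) (use a star_star_mult in auto)
  moreover have "iv r \<cdot> t \<cdot> (iv t \<cdot> s) = iv r \<cdot> s"
    using a by simp
  ultimately show ?thesis
    using a star_star_mult unfolding shift_related_def by auto
qed

lemma shift_related_refl: "(s,x) \<in> D \<Longrightarrow> shift_related s x s x"
  unfolding shift_related_def glD_iff using th_idem idem_star_mult by auto

lemma shift_related_self_eq: "shift_related p x p y \<Longrightarrow> y = x"
  unfolding shift_related_def using th_idem idem_star_mult by auto

lemma shift_image_related_trans:
  assumes "shift_related s x t y" "image_related t y r z" shows "image_related s x r z"
  using assms shift_related_image[OF shift_related_sym[OF assms(1)]]
  unfolding image_related_def shift_related_def by auto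

lemma gl_related_sym: "gl_related s x t y \<Longrightarrow> gl_related t y s x"
  unfolding gl_related_def image_related_def by (auto dest: shift_related_sym)

lemma gl_related_trans: "gl_related s x t y \<Longrightarrow> gl_related t y r z \<Longrightarrow> gl_related s x r z"
  unfolding gl_related_def
  using shift_related_trans shift_related_sym shift_image_related_trans
  by (smt (verit, best) image_related_def)

lemma gl_sim_imp_gl_related:
  assumes D: "(s,x) \<in> D" "(t,y) \<in> D" and sim: "gl_sim G Xd th (s,x) (t,y)"
  shows "gl_related s x t y"
proof -
  from sim consider (R1) "composable G (iv t) s" "x \<in> Xd (iv s \<cdot> t)" "th (iv t \<cdot> s) x = y"
    | (R2) "idem G s" "idem G t" "x = y"
    unfolding gl_sim_def by auto
  then show ?thesis
  proof cases
    case R1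
    then show ?thesis
      using D unfolding glD_iff gl_related_def shift_related_def composable_def by auto
  next
    case R2
    then show ?thesis
      using D th_idem star_idem idem_mult_self
      unfolding glD_iff gl_related_def image_related_def by metis
  qed
qed

lemma glrel_imp_gl_related: "((s,x),(t,y)) \<in> glrel G X Xd th \<Longrightarrow> gl_related s x t y"
  unfolding glrel_def using gl_sim_imp_gl_related by auto

lemma glapprox_imp_glD: "a \<approx> b \<Longrightarrow> a \<in> D \<and> b \<in> D"
  unfolding glapprox_def by auto

lemma glapprox_imp_gl_related: assumes "(s,x) \<approx> (t,y)" shows "gl_related s x t y"
proof -
  let ?r = "glrel G X Xd th"
  have "(s,x) = c \<or> gl_related s x (fst c) (snd c)" if "((s,x),c) \<in> (?r \<union> ?r\<inverse>)\<^sup>*" for c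
    using that
  proof (induction rule: rtrancl_induct)
    case (step b c)
    have "gl_related (fst b) (snd b) (fst c) (snd c)"
      using step(2) glrel_imp_gl_related gl_related_sym by (cases b; cases c) auto
    then show ?case
      using step(3) gl_related_trans by auto
  qed simp
  moreover have "((s,x),(t,y)) \<in> (?r \<union> ?r\<inverse>)\<^sup>*" and "(s,x) \<in> D"
    using assms unfolding glapprox_def by auto
  ultimately show ?thesis
    using shift_related_refl gl_related_def by fastforce
qed

lemma glrel_to_range_idem:
  assumes p: "(p,w) \<in> D" "w \<in> Xd (iv p)"
  shows "((p,w),(p \<cdot> iv p, th p w)) \<in> glrel G X Xd th" "(p \<cdot> iv p, th p w) \<in> D"
proof -
  have pA: "p \<in> A" and star_e: "iv (p \<cdot> iv p) = p \<cdot> iv p"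
    using p glD_iff star_idem idem_mult_star by auto
  have "th p w \<in> Xd (p \<cdot> iv p)"
    using Xd_subset_Xd_range th_in_Xd pA p by metis
  then show D2: "(p \<cdot> iv p, th p w) \<in> D"
    using glD_iff pA star_e idem_mult_self[OF idem_mult_star[OF pA]] by simp
  have "gl_sim G Xd th (p,w) (p \<cdot> iv p, th p w)"
    unfolding gl_sim_def composable_def using pA p star_e idem_mult_left[OF idem_mult_star] by auto
  then show "((p,w),(p \<cdot> iv p, th p w)) \<in> glrel G X Xd th"
    using p D2 unfolding glrel_def by auto
qed

text \<open>Pairs with a common image are linked through the units at their codomains by two (R1)
  steps and one (R2) step.\<close>
lemma gl_related_imp_glapprox:
  assumes sx: "(s,x) \<in> D" and ty: "(t,y) \<in> D" and rel: "gl_related s x t y"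
  shows "(s,x) \<approx> (t,y)"
proof -
  let ?r = "glrel G X Xd th"
  have "((s,x),(t,y)) \<in> (?r \<union> ?r\<inverse>)\<^sup>*"
  proof (cases "shift_related s x t y")
    case True
    then have "((s,x),(t,y)) \<in> ?r"
      using sx ty unfolding glrel_def gl_sim_def shift_related_def composable_def by auto
    then show ?thesis by auto
  next
    case False
    then have i: "image_related s x t y"
      using rel gl_related_def by blast
    then have x: "x \<in> Xd (iv s)" and y: "y \<in> Xd (iv t)" and img: "th s x = th t y"
      unfolding image_related_def by auto
    have units: "((s \<cdot> iv s, th s x),(t \<cdot> iv t, th t y)) \<in> ?r"
      using glrel_to_range_idem(2)[OF sx x] glrel_to_range_idem(2)[OF ty y] img sx ty glD_iff
      unfolding glrel_def gl_sim_def by auto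
    have "((s,x),(s \<cdot> iv s, th s x)) \<in> (?r \<union> ?r\<inverse>)\<^sup>*"
      using glrel_to_range_idem(1)[OF sx x] by blast
    also have "((s \<cdot> iv s, th s x),(t \<cdot> iv t, th t y)) \<in> (?r \<union> ?r\<inverse>)\<^sup>*"
      using units by blast
    also have "((t \<cdot> iv t, th t y),(t,y)) \<in> (?r \<union> ?r\<inverse>)\<^sup>*"
      using glrel_to_range_idem(1)[OF ty y] by blast
    finally show ?thesis .
  qed
  then show ?thesis
    using sx ty unfolding glapprox_def by auto
qed

lemma glapprox_iff: "(s,x) \<approx> (t,y) \<longleftrightarrow> (s,x) \<in> D \<and> (t,y) \<in> D \<and> gl_related s x t y"
  using glapprox_imp_glD glapprox_imp_gl_related gl_related_imp_glapprox by blast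

lemma equiv_glapprox: "equiv D (glapprox G X Xd th)"
proof (rule equivI)
  show "glapprox G X Xd th \<subseteq> D \<times> D"
    unfolding glapprox_def by (rule Int_lower2)
  show "refl_on D (glapprox G X Xd th)"
    unfolding refl_on_def using glapprox_iff shift_related_refl gl_related_def by auto
  show "sym (glapprox G X Xd th)"
    unfolding sym_def using glapprox_iff gl_related_sym by auto
  show "trans (glapprox G X Xd th)"
    unfolding trans_def using glapprox_iff gl_related_trans by auto
qed

lemma image_related_same_cod_imp_shift_related:
  assumes rel: "image_related s x t y" and cod: "cd s = cd t"
  shows "shift_related s x t y"
proof -
  have a: "s \<in> A" "t \<in> A" "x \<in> Xd (iv s)" "y \<in> Xd (iv t)" "th s x = th t y"
    using rel image_related_def by auto
  have "x \<in> Xd (iv (iv t \<cdot> s)) \<and> th (iv t \<cdot> s) x = th (iv t) (th s x)"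
    using th_mult[of "iv t" s x] a th_in_Xd[of t y] cod by simp
  then show ?thesis
    using a th_star_th cod star_star_mult unfolding shift_related_def by auto
qed

lemma glapprox_same_cod: "(s,x) \<approx> (t,y) \<Longrightarrow> cd s = cd t \<Longrightarrow> shift_related s x t y"
  using glapprox_iff image_related_same_cod_imp_shift_related unfolding gl_related_def by blast

lemma glapprox_th_eq:
  assumes "(s,x) \<approx> (t,y)" "x \<in> Xd (iv s)" shows "y \<in> Xd (iv t) \<and> th t y = th s x"
  using assms glapprox_iff shift_related_image unfolding gl_related_def image_related_def by auto

section \<open>The order on E\<close>

lemma mem_cls_iff: "b \<in> cls a \<longleftrightarrow> a \<approx> b"
  unfolding glcls_def by auto

lemma cls_self: "a \<in> D \<Longrightarrow> a \<in> cls a"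
  using mem_cls_iff equiv_glapprox unfolding equiv_def refl_on_def by blast

lemma cls_eq_iff: "a \<in> D \<Longrightarrow> b \<in> D \<Longrightarrow> cls a = cls b \<longleftrightarrow> a \<approx> b"
  unfolding glcls_def using eq_equiv_class_iff[OF equiv_glapprox] by blast

lemma glE_iff: "C \<in> E \<longleftrightarrow> (\<exists>a\<in>D. C = cls a)"
  unfolding glE_def quotient_def glcls_def by auto

lemma cls_in_glE: "a \<in> D \<Longrightarrow> cls a \<in> E"
  using glE_iff by blast

lemma glE_eq_cls: assumes C: "C \<in> E" and a: "a \<in> C" shows "C = cls a"
proof -
  obtain c where c: "c \<in> D" "C = cls c"
    using C glE_iff by blast
  then show ?thesis
    using a mem_cls_iff cls_eq_iff glapprox_imp_glD by blast
qed

lemma glE_glapprox: "C \<in> E \<Longrightarrow> a \<in> C \<Longrightarrow> b \<in> C \<Longrightarrow> a \<approx> b"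
  using glE_eq_cls mem_cls_iff by blast

lemma glE_subset_glD: "C \<in> E \<Longrightarrow> a \<in> C \<Longrightarrow> a \<in> D"
  using glE_glapprox glapprox_imp_glD by blast

lemma glE_cases:
  assumes "C \<in> E"
  obtains p x where "(p,x) \<in> D" "C = cls (p,x)" "(p,x) \<in> C"
  using assms glE_iff cls_self by fastforce

lemma glD_down_closed: "(p,y) \<in> D \<Longrightarrow> x \<le>\<^sub>X y \<Longrightarrow> (p,x) \<in> D"
  using Xd_down_closed glD_iff mult_arr star_arr dom_star by metis

lemma glD_arr: "(p,y) \<in> D \<Longrightarrow> y \<in> arr X"
  using Xd_arr glD_iff mult_arr star_arr dom_star by metis

lemma shift_related_lower:
  assumes rel: "shift_related r y' p y" and py: "(p,y) \<in> D" and le: "x' \<le>\<^sub>X y'"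
  shows "\<exists>x. x \<le>\<^sub>X y \<and> (p,x) \<in> D \<and> shift_related r x' p x"
proof -
  let ?u = "iv p \<cdot> r"
  have a: "r \<in> A" "p \<in> A" "cd r = cd p" "y' \<in> Xd (iv r \<cdot> p)" "th ?u y' = y"
    using rel unfolding shift_related_def by auto
  have uA: "?u \<in> A" and star_u: "iv ?u = iv r \<cdot> p"
    using a star_star_mult by auto
  have x': "x' \<in> Xd (iv r \<cdot> p)"
    using Xd_down_closed[of "iv r \<cdot> p" y' x'] a le by simp
  have "th ?u x' \<le>\<^sub>X y"
    using th_le_iff[OF uA, of x' y'] star_u x' a le by simp
  moreover have "shift_related r x' p (th ?u x')"
    unfolding shift_related_def using a x' by auto
  ultimately show ?thesis
    using glD_down_closed py by blast
qed

lemma image_related_lower: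
  assumes rel: "image_related r y' p y" and py: "(p,y) \<in> D" and le: "x' \<le>\<^sub>X y'"
  shows "\<exists>x. x \<le>\<^sub>X y \<and> (p,x) \<in> D \<and> image_related r x' p x"
proof -
  have a: "r \<in> A" "p \<in> A" "y' \<in> Xd (iv r)" "y \<in> Xd (iv p)" "th r y' = th p y"
    using rel unfolding image_related_def by auto
  have x': "x' \<in> Xd (iv r)"
    using Xd_down_closed[of "iv r" y' x'] a le by simp
  have rx'_le: "th r x' \<le>\<^sub>X th p y"
    using th_le_iff[OF a(1)] x' a le by metis
  have py_in: "th p y \<in> Xd p"
    using th_in_Xd a by blast
  have rx'_in: "th r x' \<in> Xd p"
    using Xd_down_closed[OF a(2) py_in rx'_le] .
  let ?x = "th (iv p) (th r x')"
  have "?x \<le>\<^sub>X th (iv p) (th p y)"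
    using th_le_iff[of "iv p" "th r x'" "th p y"] a rx'_in py_in rx'_le by simp
  then have "?x \<le>\<^sub>X y"
    using th_star_th a by simp
  moreover have "image_related r x' p ?x"
    unfolding image_related_def using a x' th_in_Xd[of "iv p"] th_th_star rx'_in by simp
  ultimately show ?thesis
    using glD_down_closed py by blast
qed

lemma glapprox_lower:
  assumes "(r,y') \<approx> (p,y)" and "x' \<le>\<^sub>X y'"
  shows "\<exists>x. x \<le>\<^sub>X y \<and> (r,x') \<approx> (p,x)"
proof -
  have ry': "(r,y') \<in> D" and py: "(p,y) \<in> D" and rel: "gl_related r y' p y"
    using assms(1) glapprox_iff by auto
  have "(r,x') \<in> D"
    using glD_down_closed ry' assms(2) by blast
  then show ?thesis
    using rel shift_related_lower[OF _ py assms(2)] image_related_lower[OF _ py assms(2)]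
      glapprox_iff gl_related_def by meson
qed

abbreviation le_E (infix "\<le>\<^sub>E" 50) where "C \<le>\<^sub>E C' \<equiv> glle G X Xd th C C'"

lemma glle_clsI: assumes "(p,y) \<in> D" "x \<le>\<^sub>X y" shows "cls (p,x) \<le>\<^sub>E cls (p,y)"
  unfolding glle_def using assms glD_down_closed cls_self X.nat_le_arr by blast

lemma glle_at_rep:
  assumes C: "C \<in> E" and C': "C' \<in> E" and le: "C \<le>\<^sub>E C'" and py: "(p,y) \<in> C'"
  shows "\<exists>x. x \<le>\<^sub>X y \<and> (p,x) \<in> C"
proof -
  obtain r y' x' where w: "(r,y') \<in> C'" "x' \<le>\<^sub>X y'" "(r,x') \<in> C"
    using le unfolding glle_def by blast
  have "(r,y') \<approx> (p,y)"
    using glE_glapprox C' w py by blast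
  then obtain x where "x \<le>\<^sub>X y" "(r,x') \<approx> (p,x)"
    using glapprox_lower w by blast
  moreover have "C = cls (r,x')"
    using glE_eq_cls C w by blast
  ultimately show ?thesis
    using mem_cls_iff by blast
qed

lemma poset_glE: "poset_on E (\<le>\<^sub>E)"
  unfolding poset_on_def
proof (intro conjI ballI impI)
  fix C assume "C \<in> E"
  then show "C \<le>\<^sub>E C"
    by (elim glE_cases) (use glle_clsI X.nat_le_refl glD_arr in blast)
next
  fix C C' assume C: "C \<in> E" and C': "C' \<in> E" and le: "C \<le>\<^sub>E C' \<and> C' \<le>\<^sub>E C"
  obtain p y where py: "(p,y) \<in> C'"
    using C' by (elim glE_cases)
  obtain x where x: "x \<le>\<^sub>X y" "(p,x) \<in> C"
    using glle_at_rep C C' le py by blast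
  obtain z where z: "z \<le>\<^sub>X x" "(p,z) \<in> C'"
    using glle_at_rep C' C le x by blast
  have "shift_related p z p y"
    using glapprox_same_cod glE_glapprox C' z py by blast
  then have "x = y"
    using shift_related_self_eq X.nat_le_antisym x z by blast
  then show "C = C'"
    using glE_eq_cls C C' x py by blast
next
  fix C1 C2 C3 assume C: "C1 \<in> E" "C2 \<in> E" "C3 \<in> E" and le: "C1 \<le>\<^sub>E C2 \<and> C2 \<le>\<^sub>E C3"
  obtain p z where pz: "(p,z) \<in> D" "C3 = cls (p,z)" "(p,z) \<in> C3"
    using C(3) by (elim glE_cases)
  obtain y where y: "y \<le>\<^sub>X z" "(p,y) \<in> C2"
    using glle_at_rep C le pz by blast
  obtain x where x: "x \<le>\<^sub>X y" "(p,x) \<in> C1"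
    using glle_at_rep C le y by blast
  have "cls (p,x) \<le>\<^sub>E cls (p,z)"
    using glle_clsI pz X.nat_le_trans x y by blast
  moreover have "C1 = cls (p,x)"
    using glE_eq_cls C x by blast
  ultimately show "C1 \<le>\<^sub>E C3"
    using pz by simp
qed

section \<open>The global action\<close>

abbreviation "Es \<equiv> glEs G X Xd th"
abbreviation "eta \<equiv> gleta G X Xd th"

lemma glDs_iff: assumes s: "s \<in> A" shows "(p,x) \<in> glDs G X Xd s \<longleftrightarrow> (p,x) \<in> D \<and> cd p = cd s"
proof -
  have "iv p \<cdot> s \<cdot> iv s \<cdot> p = iv p \<cdot> p" if "p \<in> A" "cd p = cd s"
    using s that by simp
  then show ?thesis
    unfolding glDs_def composable_def using s glD_iff by auto
qed

lemma glEs_iff: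
  assumes s: "s \<in> A" shows "C \<in> Es s \<longleftrightarrow> (\<exists>p x. (p,x) \<in> D \<and> cd p = cd s \<and> C = cls (p,x))"
proof -
  have "C \<in> Es s \<longleftrightarrow> (\<exists>p x. (p,x) \<in> glDs G X Xd s \<and> C = cls (p,x))"
    unfolding glEs_def by auto
  then show ?thesis
    by (simp only: glDs_iff[OF s] conj_assoc)
qed

lemma cls_in_glEs: "s \<in> A \<Longrightarrow> (p,x) \<in> D \<Longrightarrow> cd p = cd s \<Longrightarrow> cls (p,x) \<in> Es s"
  using glEs_iff by blast

lemma glEs_subset_glE: "s \<in> A \<Longrightarrow> Es s \<subseteq> E"
  unfolding glEs_def glDs_def using cls_in_glE by blast

lemma glEs_cod_eq: "s \<in> A \<Longrightarrow> t \<in> A \<Longrightarrow> cd s = cd t \<Longrightarrow> Es s = Es t"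
  using glEs_iff[of s] glEs_iff[of t] by (intro set_eqI) presburger

lemma glEs_memI:
  assumes "s \<in> A" "C \<in> E" "(p,x) \<in> C" "cd p = cd s" shows "C \<in> Es s"
proof -
  have "C = cls (p,x)" "(p,x) \<in> D"
    using assms(2,3) by (rule glE_eq_cls, rule glE_subset_glD)
  then show ?thesis
    using assms(1,4) by (simp add: cls_in_glEs)
qed

lemma glD_mult: assumes s: "s \<in> A" and px: "(p,x) \<in> D" and c: "cd p = dm s" shows "(s \<cdot> p, x) \<in> D"
proof -
  have "p \<in> A" "x \<in> Xd (iv p \<cdot> p)"
    using px glD_iff by auto
  moreover have "iv (s \<cdot> p) \<cdot> (s \<cdot> p) = iv p \<cdot> p"
    using s c calculation by (simp add: star_mult)
  ultimately show ?thesis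
    using s c glD_iff by simp
qed

lemma shift_related_mult:
  assumes s: "s \<in> A" and rel: "shift_related p x q y" and c: "cd p = dm s"
  shows "shift_related (s \<cdot> p) x (s \<cdot> q) y"
proof -
  have a: "p \<in> A" "q \<in> A" "cd p = cd q"
    using rel shift_related_def by auto
  then have "iv (s \<cdot> p) \<cdot> (s \<cdot> q) = iv p \<cdot> q" "iv (s \<cdot> q) \<cdot> (s \<cdot> p) = iv q \<cdot> p"
    using s c by (simp_all add: star_mult)
  then show ?thesis
    using rel a s c unfolding shift_related_def by simp
qed

text \<open>The choice made in the definition of eta is immaterial: representatives with a common
  codomain are shift related, and left translation preserves this.\<close>
lemma gleta_cls:
  assumes s: "s \<in> A" and px: "(p,x) \<in> D" and c: "cd p = dm s"
  shows "eta s (cls (p,x)) = cls (s \<cdot> p, x)"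
  unfolding gleta_def
proof (rule someI2)
  show "\<exists>q y. (q,y) \<in> cls (p,x) \<and> (q,y) \<in> glDs G X Xd (iv s) \<and> cls (s \<cdot> p, x) = cls (s \<cdot> q, y)"
    using cls_self px glDs_iff[OF star_arr[OF s]] s c by auto
next
  fix C' assume "\<exists>q y. (q,y) \<in> cls (p,x) \<and> (q,y) \<in> glDs G X Xd (iv s) \<and> C' = cls (s \<cdot> q, y)"
  then obtain q y where q: "(p,x) \<approx> (q,y)" "(q,y) \<in> D" "cd q = dm s" "C' = cls (s \<cdot> q, y)"
    using mem_cls_iff glDs_iff[OF star_arr[OF s]] s by auto
  have "shift_related (s \<cdot> p) x (s \<cdot> q) y"
    using glapprox_same_cod shift_related_mult q s c by simp
  moreover have "(s \<cdot> p, x) \<in> D" "(s \<cdot> q, y) \<in> D"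
    using glD_mult s px c q by auto
  ultimately have "(s \<cdot> p, x) \<approx> (s \<cdot> q, y)"
    unfolding glapprox_iff gl_related_def by simp
  then have "cls (s \<cdot> p, x) = cls (s \<cdot> q, y)"
    using cls_eq_iff glapprox_imp_glD by blast
  then show "C' = cls (s \<cdot> p, x)"
    using q(4) by simp
qed

lemma gleta_in_glEs: "s \<in> A \<Longrightarrow> C \<in> Es (iv s) \<Longrightarrow> eta s C \<in> Es s"
  and gleta_star_gleta: "s \<in> A \<Longrightarrow> C \<in> Es (iv s) \<Longrightarrow> eta (iv s) (eta s C) = C"
proof -
  assume s: "s \<in> A" and "C \<in> Es (iv s)"
  then obtain p x where p: "(p,x) \<in> D" "cd p = dm s" "C = cls (p,x)"
    using glEs_iff[OF star_arr[OF s]] s by auto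
  have pA: "p \<in> A"
    using p glD_iff by auto
  have sp: "eta s C = cls (s \<cdot> p, x)" "(s \<cdot> p, x) \<in> D"
    using gleta_cls glD_mult s p by auto
  then show "eta s C \<in> Es s"
    using cls_in_glEs s pA p by simp
  have "eta (iv s) (cls (s \<cdot> p, x)) = cls (iv s \<cdot> (s \<cdot> p), x)"
    using gleta_cls[of "iv s"] s sp pA p by simp
  then show "eta (iv s) (eta s C) = C"
    using sp s pA p by simp
qed

lemma gleta_mono:
  assumes s: "s \<in> A" and C: "C \<in> Es (iv s)" and C': "C' \<in> Es (iv s)" and le: "C \<le>\<^sub>E C'"
  shows "eta s C \<le>\<^sub>E eta s C'"
proof -
  obtain p y where p: "(p,y) \<in> D" "cd p = dm s" "C' = cls (p,y)"
    using C' glEs_iff[OF star_arr[OF s]] s by auto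
  have CE: "C \<in> E" "C' \<in> E"
    using C C' glEs_subset_glE[of "iv s"] s by auto
  have "(p,y) \<in> C'"
    using p cls_self by simp
  then obtain x where x: "x \<le>\<^sub>X y" "(p,x) \<in> C"
    using glle_at_rep[OF CE le] by blast
  have "C = cls (p,x)" "(p,x) \<in> D"
    using CE(1) x(2) by (rule glE_eq_cls, rule glE_subset_glD)
  moreover have "cls (s \<cdot> p, x) \<le>\<^sub>E cls (s \<cdot> p, y)"
    using glle_clsI glD_mult s p x by blast
  ultimately show ?thesis
    using gleta_cls s p by simp
qed

lemma gleta_le_iff:
  assumes s: "s \<in> A" and C: "C \<in> Es (iv s)" and C': "C' \<in> Es (iv s)"
  shows "C \<le>\<^sub>E C' \<longleftrightarrow> eta s C \<le>\<^sub>E eta s C'"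
proof
  assume "C \<le>\<^sub>E C'"
  then show "eta s C \<le>\<^sub>E eta s C'"
    by (rule gleta_mono[OF assms])
next
  assume "eta s C \<le>\<^sub>E eta s C'"
  moreover have "eta s C \<in> Es (iv (iv s))" "eta s C' \<in> Es (iv (iv s))"
    using gleta_in_glEs assms by auto
  ultimately have "eta (iv s) (eta s C) \<le>\<^sub>E eta (iv s) (eta s C')"
    using gleta_mono[of "iv s"] s by simp
  then show "C \<le>\<^sub>E C'"
    using gleta_star_gleta assms by simp
qed

lemma gleta_mult:
  assumes "s \<in> A" "t \<in> A" "dm s = cd t" "C \<in> Es (iv t)"
  shows "eta (s \<cdot> t) C = eta s (eta t C)"
proof -
  obtain p x where p: "(p,x) \<in> D" "cd p = dm t" "C = cls (p,x)"
    using assms(2,4) glEs_iff[OF star_arr[OF assms(2)]] by auto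
  then have "p \<in> A"
    using glD_iff by auto
  then show ?thesis
    using assms p gleta_cls glD_mult by simp
qed

lemma glEs_star_mult: "s \<in> A \<Longrightarrow> t \<in> A \<Longrightarrow> dm s = cd t \<Longrightarrow> Es (iv (s \<cdot> t)) = Es (iv t)"
  and glEs_eq_glEs_star: "s \<in> A \<Longrightarrow> t \<in> A \<Longrightarrow> dm s = cd t \<Longrightarrow> Es t = Es (iv s)"
  by (simp_all add: glEs_cod_eq[of "iv (s \<cdot> t)" "iv t"] glEs_cod_eq[of t "iv s"])

lemma glE_eq_Union_glEs: "E = (\<Union>s\<in>A. Es s)"
proof
  show "E \<subseteq> (\<Union>s\<in>A. Es s)"
  proof
    fix C assume "C \<in> E"
    then obtain p x where px: "(p,x) \<in> D" "C = cls (p,x)"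
      by (elim glE_cases)
    then have "p \<in> A"
      using glD_iff by simp
    moreover have "C \<in> Es p"
      using cls_in_glEs[OF calculation px(1)] px(2) by simp
    ultimately show "C \<in> (\<Union>s\<in>A. Es s)"
      by blast
  qed
  show "(\<Union>s\<in>A. Es s) \<subseteq> E"
    using glEs_subset_glE by blast
qed

lemma bij_betw_gleta: assumes s: "s \<in> A" shows "bij_betw (eta s) (Es (iv s)) (Es s)"
proof (rule bij_betw_byWitness[where f' = "eta (iv s)"])
  show "\<forall>C\<in>Es (iv s). eta (iv s) (eta s C) = C" "eta s ` Es (iv s) \<subseteq> Es s"
    using gleta_star_gleta gleta_in_glEs s by auto
  show "\<forall>C\<in>Es s. eta s (eta (iv s) C) = C" "eta (iv s) ` Es s \<subseteq> Es (iv s)"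
    using gleta_star_gleta[of "iv s"] gleta_in_glEs[of "iv s"] s by auto
qed

lemma partial_action_gleta: "partial_action G E Es eta"
  unfolding partial_action_def
proof (intro conjI allI impI ballI glE_eq_Union_glEs)
  show "Es s \<subseteq> E" if "s \<in> A" for s
    using glEs_subset_glE that .
  show "bij_betw (eta s) (Es (iv s)) (Es s)" if "s \<in> A" for s
    using bij_betw_gleta that .
  show "eta (iv s) (eta s C) = C" if "s \<in> A" "C \<in> Es (iv s)" for s C
    using gleta_star_gleta that .
  show "Es s \<subseteq> Es t" if "nat_le G s t" for s t
    using nat_le_imp_eq[OF that] by simp
next
  fix s t C assume "composable G s t" "C \<in> Es (iv t)"
  then show "C \<in> Es (iv (s \<cdot> t))" "eta (s \<cdot> t) C = eta s (eta t C)"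
    using glEs_star_mult[of s t] gleta_mult[of s t C] unfolding composable_def by auto
qed

lemma order_ideal_glEs: assumes s: "s \<in> A" shows "order_ideal E (\<le>\<^sub>E) (Es s)"
  unfolding order_ideal_def
proof (intro conjI ballI impI)
  show "Es s \<subseteq> E"
    using glEs_subset_glE s .
  fix C C' assume C': "C' \<in> Es s" and C: "C \<in> E" and le: "C \<le>\<^sub>E C'"
  obtain p y where p: "(p,y) \<in> D" "cd p = cd s" "C' = cls (p,y)"
    using C' glEs_iff[OF s] by auto
  have "C' \<in> E" "(p,y) \<in> C'"
    using p cls_in_glE cls_self by auto
  then obtain x where "(p,x) \<in> C"
    using glle_at_rep[OF C _ le] by blast
  then show "C \<in> Es s"
    using glEs_memI[OF s C] p by blast
qed

lemma ordered_global_action_gleta: "ordered_global_action G E (\<le>\<^sub>E) Es eta"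
  unfolding ordered_global_action_def global_action_def ordered_action_cond_def
proof (intro conjI partial_action_gleta allI impI ballI order_ideal_glEs)
  fix s t C assume "composable G s t" "C \<in> Es (iv (s \<cdot> t))"
  then show "C \<in> Es (iv t)" "eta t C \<in> Es (iv s)"
    using glEs_star_mult[of s t] glEs_eq_glEs_star[of s t] gleta_in_glEs[of t C]
    unfolding composable_def by auto
next
  fix s C C' assume "s \<in> A" "C \<in> Es (iv s)" "C' \<in> Es (iv s)"
  then show "C \<le>\<^sub>E C' \<longleftrightarrow> eta s C \<le>\<^sub>E eta s C'"
    by (rule gleta_le_iff)
qed

section \<open>The embedding of X\<close>

abbreviation "i \<equiv> gli G X Xd th"

lemma arr_X_in_Xd_idem: "x \<in> arr X \<Longrightarrow> \<exists>e. idem G e \<and> x \<in> Xd e"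
  using arr_X_covered Xd_subset_Xd_range idem_mult_star by blast

lemma glD_idemI: "idem G e \<Longrightarrow> x \<in> Xd e \<Longrightarrow> (e,x) \<in> D"
  using glD_iff star_idem_mult idem_arr by simp

lemma gli_eq_cls: assumes e: "idem G e" and x: "x \<in> Xd e" shows "i x = cls (e,x)"
proof -
  define e' where "e' = (SOME e. idem G e \<and> x \<in> Xd e)"
  have e': "idem G e'" "x \<in> Xd e'"
    unfolding e'_def using someI_ex[of "\<lambda>e. idem G e \<and> x \<in> Xd e"] e x by blast+
  have "image_related e' x e x"
    unfolding image_related_def using e e' x idem_arr star_idem th_idem by simp
  then have "(e',x) \<approx> (e,x)"
    using gl_related_imp_glapprox glD_idemI e e' x gl_related_def by blast
  then have "cls (e',x) = cls (e,x)"
    using cls_eq_iff glapprox_imp_glD by blast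
  then show ?thesis
    unfolding gli_def e'_def by simp
qed

lemma gli_image_subset: "i ` arr X \<subseteq> E"
proof
  fix C assume "C \<in> i ` arr X"
  then obtain x e where "C = i x" "idem G e" "x \<in> Xd e"
    using arr_X_in_Xd_idem by blast
  then show "C \<in> E"
    using gli_eq_cls glD_idemI cls_in_glE by simp
qed

lemma inj_on_gli: "inj_on i (arr X)"
proof (rule inj_onI)
  fix x y assume "x \<in> arr X" "y \<in> arr X" and i_eq: "i x = i y"
  then obtain e f where e: "idem G e" "x \<in> Xd e" and f: "idem G f" "y \<in> Xd f"
    using arr_X_in_Xd_idem by blast
  have "cls (e,x) = cls (f,y)"
    using i_eq gli_eq_cls e f by simp
  then have "(e,x) \<approx> (f,y)"
    using cls_eq_iff glD_idemI e f by blast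
  then have "th f y = th e x"
    using glapprox_th_eq e star_idem by simp
  then show "x = y"
    using th_idem e f by simp
qed

text \<open>Below i y = [f,y] everything is represented over the same unit f, where the order of E
  is the order of X.\<close>
lemma gli_le_at_unit:
  assumes f: "idem G f" "y \<in> Xd f" and C: "C \<in> E" and le: "C \<le>\<^sub>E i y"
  shows "\<exists>x. x \<le>\<^sub>X y \<and> x \<in> Xd f \<and> C = i x"
proof -
  have "i y \<in> E" "(f,y) \<in> i y"
    using gli_eq_cls glD_idemI cls_self cls_in_glE f by simp_all
  then obtain x where x: "x \<le>\<^sub>X y" "(f,x) \<in> C"
    using glle_at_rep[OF C _ le] by blast
  have "x \<in> Xd f"
    using Xd_down_closed idem_arr f x by blast
  moreover have "C = cls (f,x)"
    using glE_eq_cls C x by blast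
  ultimately show ?thesis
    using gli_eq_cls f x by auto
qed

lemma gli_le_iff:
  assumes x: "x \<in> arr X" and y: "y \<in> arr X" shows "i x \<le>\<^sub>E i y \<longleftrightarrow> x \<le>\<^sub>X y"
proof -
  obtain f where f: "idem G f" "y \<in> Xd f"
    using arr_X_in_Xd_idem y by blast
  show ?thesis
  proof
    assume "i x \<le>\<^sub>E i y"
    then obtain x' where "x' \<le>\<^sub>X y" "x' \<in> Xd f" "i x = i x'"
      using gli_le_at_unit f gli_image_subset x by blast
    moreover have "x' \<in> arr X"
      using X.nat_le_arr calculation by blast
    ultimately show "x \<le>\<^sub>X y"
      using inj_on_gli x unfolding inj_on_def by metis
  next
    assume le: "x \<le>\<^sub>X y"
    then have "x \<in> Xd f"
      using Xd_down_closed idem_arr f by blast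
    then show "i x \<le>\<^sub>E i y"
      using glle_clsI glD_idemI f le gli_eq_cls by simp
  qed
qed

lemma order_ideal_gli_image: "order_ideal E (\<le>\<^sub>E) (i ` arr X)"
  unfolding order_ideal_def
proof (intro conjI ballI impI gli_image_subset)
  fix C' C assume "C' \<in> i ` arr X" and C: "C \<in> E" and le: "C \<le>\<^sub>E C'"
  then obtain y f where "C' = i y" "idem G f" "y \<in> Xd f"
    using arr_X_in_Xd_idem by blast
  then obtain x where "x \<in> Xd f" "C = i x"
    using gli_le_at_unit C le by blast
  then show "C \<in> i ` arr X"
    using Xd_arr idem_arr \<open>idem G f\<close> by blast
qed

lemma gleta_gli: assumes px: "(p,x) \<in> D" shows "i x \<in> Es (iv p)" "eta p (i x) = cls (p,x)"
proof -
  have p: "p \<in> A" "x \<in> Xd (iv p \<cdot> p)"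
    using px glD_iff by auto
  then have "i x = cls (iv p \<cdot> p, x)" "(iv p \<cdot> p, x) \<in> D"
    using gli_eq_cls glD_idemI by simp_all
  then show "i x \<in> Es (iv p)" "eta p (i x) = cls (p,x)"
    using cls_in_glEs gleta_cls p by simp_all
qed

lemma orbit_gli_image: "orbit G Es eta (i ` arr X) = E"
  unfolding orbit_def
proof
  show "(\<Union>s\<in>A. eta s ` (i ` arr X \<inter> Es (iv s))) \<subseteq> E"
    using gleta_in_glEs glEs_subset_glE by blast
  show "E \<subseteq> (\<Union>s\<in>A. eta s ` (i ` arr X \<inter> Es (iv s)))"
  proof
    fix C assume "C \<in> E"
    then obtain p x where px: "(p,x) \<in> D" "C = cls (p,x)"
      by (elim glE_cases)
    then have "p \<in> A" "x \<in> arr X"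
      using glD_iff glD_arr by auto
    then show "C \<in> (\<Union>s\<in>A. eta s ` (i ` arr X \<inter> Es (iv s)))"
      using gleta_gli[OF px(1)] px(2) by blast
  qed
qed

lemma gleta_gli_image_meets:
  assumes g: "g \<in> A" shows "eta g ` (i ` arr X \<inter> Es (iv g)) \<inter> i ` arr X \<noteq> {}"
proof -
  obtain x where x: "x \<in> Xd (iv g)"
    using Xd_nonempty g star_arr by blast
  then have gx: "(g,x) \<in> D" and x_arr: "x \<in> arr X"
    using Xd_subset_Xd_range[of "iv g" x] g glD_iff Xd_arr[of "iv g"] by simp_all
  have gx_in: "th g x \<in> Xd (g \<cdot> iv g)"
    using Xd_subset_Xd_range th_in_Xd g x by blast
  have "image_related g x (g \<cdot> iv g) (th g x)"
    unfolding image_related_def using g x gx_in th_idem star_idem by simp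
  then have "(g,x) \<approx> (g \<cdot> iv g, th g x)"
    using gl_related_imp_glapprox gx glD_idemI gx_in gl_related_def g by simp
  then have "eta g (i x) = i (th g x)"
    using gleta_gli[OF gx] gli_eq_cls[OF idem_mult_star[OF g] gx_in] cls_eq_iff glapprox_imp_glD
    by simp
  moreover have "th g x \<in> arr X"
    using Xd_arr g th_in_Xd x by blast
  ultimately show ?thesis
    using gleta_gli[OF gx] x_arr by blast
qed

lemma mcalister_triple_globalization: "mcalister_triple G E (\<le>\<^sub>E) Es eta (i ` arr X)"
  unfolding mcalister_triple_def
proof (intro conjI groupoid poset_glE order_ideal_gli_image ordered_global_action_gleta
    orbit_gli_image ballI gleta_gli_image_meets)
  obtain T :: "(('a \<times> 'x) set, ('a \<times> 'x) set) semigroupoid" where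
    "semilatticeoid T" "arr T = i ` arr X" "\<forall>x\<in>arr X. \<forall>y\<in>arr X. nat_le T (i x) (i y) \<longleftrightarrow> x \<le>\<^sub>X y"
    using semilatticeoid_image[OF X.semilatticeoid inj_on_gli] by blast
  then show "\<exists>T :: (('a \<times> 'x) set, ('a \<times> 'x) set) semigroupoid.
      semilatticeoid T \<and> arr T = i ` arr X \<and> (\<forall>C\<in>i ` arr X. \<forall>C'\<in>i ` arr X. nat_le T C C' \<longleftrightarrow> C \<le>\<^sub>E C')"
    using gli_le_iff by auto
qed

end

theorem mainTheorem9:
  fixes G :: "('a,'o) semigroupoid" and X :: "('x,'p) semigroupoid"
    and Xd :: "'a \<Rightarrow> 'x set" and th :: "'a \<Rightarrow> 'x \<Rightarrow> 'x"
  assumes "groupoid G"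
    and "semilatticeoid X"
    and "ordered_partial_action G (arr X) (nat_le X) Xd th"
    and "\<forall>g\<in>arr G. Xd g \<noteq> {}"
  shows "mcalister_triple G (glE G X Xd th) (glle G X Xd th) (glEs G X Xd th) (gleta G X Xd th)
           (gli G X Xd th ` arr X)"
proof -
  interpret globalization_setting G X Xd th
    using assms by unfold_locales
  show ?thesis
    by (rule mcalister_triple_globalization)
qed

end
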